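(* Let $d\ge 3$ and $1\le r<d/2$ be integers. For integers $m,n\ge 0$ let $\overline{C}_{d,r}(m,n)$ denote the number of overpartitions of $n$ with exactly $m$ parts that belong to the class $\overline{\mathcal{C}}_{d,r}$ described in the context below. Then, as formal power series in $x$ and $q$, \[ \sum_{m\ge 0}\sum_{n\ge 0}\overline{C}_{d,r}(m,n)\,x^m q^n=\sum_{m\ge 0}\frac{x^m q^{dm}(-q^r,-q^{d-r};q^d)_m}{(q^{2d};q^{2d})_m}. \]
   Context: Notation: $(a;q)_m=\prod_{i=0}^{m-1}(1-aq^i)$ and $(a_1,a_2;q)_m=(a_1;q)_m(a_2;q)_m$. An overpartition of $n$ is a partition of $n$ (a finite multiset of positive integers summing to $n$) in which the first occurrence of each distinct part size may be overlined; so each part is either overlined or non-overlined, and an overlined value occurs at most once. The empty overpartition is the unique overpartition of $0$ and has $0$ parts. Each part of an overpartition in the class considered here has one of four types. Type $\overline{r}$: an overlined part $\equiv r \pmod d$. Type $\overline{d-r}$: an overlined part $\equiv d-r\pmod d$. Type $\overline{d}$: an overlined part $\equiv 0\pmod d$. Type $d$: a non-overlined part $\equiv 0 \pmod d$. Define the function $A(u,v)$ for $u,v\in\{\overline{r},\overline{d-r},\overline{d},d\}$ by $A(\overline r,\overline r)=d$, $A(\overline r,\overline{d-r})=2r$, $A(\overline r,\overline d)=d+r$, $A(\overline r,d)=r$; $A(\overline{d-r},\overline r)=2d-2r$, $A(\overline{d-r},\overline{d-r})=d$, $A(\overline{d-r},\overline d)=2d-r$, $A(\overline{d-r},d)=d-r$;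 $A(\overline d,\overline r)=2d-r$, $A(\overline d,\overline{d-r})=d+r$, $A(\overline d,\overline d)=2d$, $A(\overline d,d)=d$; $A(d,\overline r)=d-r$, $A(d,\overline{d-r})=r$, $A(d,\overline d)=d$, $A(d,d)=0$. The class $\overline{\mathcal{C}}_{d,r}$ consists of the overpartitions $\lambda$ such that: every part is congruent to $r$, $d-r$ or $0$ modulo $d$, and only multiples of $d$ may be non-overlined (so every part has one of the four types above); writing the parts in weakly increasing order $\lambda_1\le\lambda_2\le\cdots\le\lambda_s$, for every $i$ with $1\le i<s$, if $\lambda_{i+1}$ has type $u$ and $\lambda_i$ has type $v$, then $\lambda_{i+1}-\lambda_i\ge A(u,v)$ and $\lambda_{i+1}-\lambda_i\equiv A(u,v)\pmod{2d}$; and the smallest part $\lambda_1$ is either a non-overlined part $\equiv d\pmod{2d}$, or an overlined part congruent modulo $2d$ to $d+r$, to $2d-r$, or to $0$. The empty overpartition (for which these conditions are vacuous) is counted, so $\overline{C}_{d,r}(0,0)=1$. *)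

theory Defs
  imports "HOL-Library.Multiset" "HOL-Computational_Algebra.Formal_Power_Series"
begin

text \<open>An overpartition is a finite multiset of parts; a part is a pair (k, b) with
  k > 0 its value and b = True iff the part is overlined. An overlined value
  occurs at most once.\<close>

definition is_overpartition :: "(nat \<times> bool) multiset \<Rightarrow> bool" where
  "is_overpartition P \<longleftrightarrow> (\<forall>p \<in># P. 0 < fst p) \<and> (\<forall>k. count P (k, True) \<le> 1)"

definition op_weight :: "(nat \<times> bool) multiset \<Rightarrow> nat" where
  "op_weight P = sum_mset (image_mset fst P)"

datatype ptype = OvR | OvDR | OvD | NonD

definition part_type :: "nat \<Rightarrow> nat \<Rightarrow> nat \<times> bool \<Rightarrow> ptype option" where
  "part_type d r p =
     (if snd p \<and> fst p mod d = r then Some OvR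
      else if snd p \<and> fst p mod d = d - r then Some OvDR
      else if snd p \<and> fst p mod d = 0 then Some OvD
      else if \<not> snd p \<and> fst p mod d = 0 then Some NonD
      else None)"

fun Afun :: "nat \<Rightarrow> nat \<Rightarrow> ptype \<Rightarrow> ptype \<Rightarrow> nat" where
  "Afun d r OvR OvR = d"
| "Afun d r OvR OvDR = 2*r"
| "Afun d r OvR OvD = d + r"
| "Afun d r OvR NonD = r"
| "Afun d r OvDR OvR = 2*d - 2*r"
| "Afun d r OvDR OvDR = d"
| "Afun d r OvDR OvD = 2*d - r"
| "Afun d r OvDR NonD = d - r"
| "Afun d r OvD OvR = 2*d - r"
| "Afun d r OvD OvDR = d + r"
| "Afun d r OvD OvD = 2*d"
| "Afun d r OvD NonD = d"
| "Afun d r NonD OvR = d - r"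
| "Afun d r NonD OvDR = r"
| "Afun d r NonD OvD = d"
| "Afun d r NonD NonD = 0"

definition gap_ok :: "nat \<Rightarrow> nat \<Rightarrow> nat \<times> bool \<Rightarrow> nat \<times> bool \<Rightarrow> bool" where
  "gap_ok d r lo hi \<longleftrightarrow>
     (let a = Afun d r (the (part_type d r hi)) (the (part_type d r lo));
          g = fst hi - fst lo
      in a \<le> g \<and> g mod (2*d) = a mod (2*d))"

definition smallest_ok :: "nat \<Rightarrow> nat \<Rightarrow> nat \<times> bool \<Rightarrow> bool" where
  "smallest_ok d r p \<longleftrightarrow>
     (\<not> snd p \<and> fst p mod (2*d) = d) \<or>
     (snd p \<and> fst p mod (2*d) \<in> {(d + r) mod (2*d), (2*d - r) mod (2*d), 0})"

definition in_Cbar :: "nat \<Rightarrow> nat \<Rightarrow> (nat \<times> bool) multiset \<Rightarrow> bool" where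
  "in_Cbar d r P \<longleftrightarrow>
     is_overpartition P \<and> (\<forall>p \<in># P. part_type d r p \<noteq> None) \<and>
     (\<exists>xs. mset xs = P \<and> sorted (map fst xs) \<and>
        (\<forall>i. Suc i < length xs \<longrightarrow> gap_ok d r (xs ! i) (xs ! Suc i)) \<and>
        (xs \<noteq> [] \<longrightarrow> smallest_ok d r (hd xs)))"

definition Cbar :: "nat \<Rightarrow> nat \<Rightarrow> nat \<Rightarrow> nat \<Rightarrow> nat" where
  "Cbar d r m n = card {P. in_Cbar d r P \<and> size P = m \<and> op_weight P = n}"

text \<open>Coefficient of x^m in the right-hand side, as a power series in q.\<close>
definition rhs_coeff :: "nat \<Rightarrow> nat \<Rightarrow> nat \<Rightarrow> rat fps" where
  "rhs_coeff d r m =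
     fps_X ^ (d * m)
     * (\<Prod>i<m. (1 + fps_X ^ (d * i + r)) * (1 + fps_X ^ (d * i + (d - r))))
     * inverse (\<Prod>i<m. 1 - fps_X ^ (2 * d * (i + 1)))"

end

theory Submission
  imports Defs "HOL-Library.Product_Lexorder"
begin

(*
  Read an overpartition in Cbar(d,r) from its smallest part upwards and record, for each
  part, its type a and the number g >= 0 of multiples of 2d by which its distance to the
  previous part exceeds the minimum A(a, b) prescribed for types a and b; the smallest part
  is treated in the same way, its "previous part" being a virtual overlined 0 of type OvD.
  This is a bijection onto arbitrary lists of pairs (a, g).  Because
  A(a, b) = c(a) - c(b) + d k(b), where c = type_offset and k = type_rise, the i-th part
  is d (1 + k(a_1) + ... + k(a_(i-1)) + 2 (g_1 + ... + g_i)) + c(a_i), so removing the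
  smallest part of an overpartition with m+1 parts leaves the code of one with m parts and
  lowers the weight by d + c(a) + m d k(a) + 2d(m+1) g.  Summing over the four types gives
  the factor q^d (1 + q^(dm+r)) (1 + q^(dm+d-r)), and summing over g the factor
  1/(1 - q^(2d(m+1))).
*)

unbundle fps_syntax

lemma count_mset_le_1_if_sorted_wrt:
  assumes "sorted_wrt R xs" and "\<not> R x x"
  shows "count (mset xs) x \<le> 1"
  using assms by (induction xs) (auto simp: count_eq_zero_iff)

lemma UNIV_ptype: "(UNIV :: ptype set) = {OvR, OvDR, OvD, NonD}"
  using ptype.exhaust by auto

lemma finite_UNIV_ptype [simp]: "finite (UNIV :: ptype set)"
  by (simp add: UNIV_ptype)

lemma op_weight_mset: "op_weight (mset xs) = sum_list (map fst xs)"
  by (simp add: op_weight_def sum_mset_sum_list flip: mset_map)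

section \<open>Codes of overpartitions\<close>

definition type_offset :: "nat \<Rightarrow> nat \<Rightarrow> ptype \<Rightarrow> nat" where
  "type_offset d r a = (case a of OvR \<Rightarrow> r | OvDR \<Rightarrow> d - r | OvD \<Rightarrow> d | NonD \<Rightarrow> 0)"

definition type_rise :: "ptype \<Rightarrow> nat" where
  "type_rise a = (case a of OvR \<Rightarrow> 1 | OvDR \<Rightarrow> 1 | OvD \<Rightarrow> 2 | NonD \<Rightarrow> 0)"

fun level_parts :: "nat \<Rightarrow> nat \<Rightarrow> nat \<Rightarrow> (ptype \<times> nat) list \<Rightarrow> (nat \<times> bool) list" where
  "level_parts d r j [] = []"
| "level_parts d r j ((a, g) # xs) =
     (d * (j + 2 * g) + type_offset d r a, a \<noteq> NonD) #
       level_parts d r (j + type_rise a + 2 * g) xs"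

definition part_le :: "nat \<times> bool \<Rightarrow> nat \<times> bool \<Rightarrow> bool" where
  "part_le p q \<longleftrightarrow> fst p \<le> fst q \<and> (snd p \<longrightarrow> fst p < fst q)"

text \<open>Level 1 is the level following a virtual overlined part 0 of type OvD: the condition
  on the smallest part of an overpartition in Cbar is the gap condition relative to this
  virtual part (\<open>smallest_ok_iff_gap_ok_zero\<close>).\<close>

definition overpartition_of :: "nat \<Rightarrow> nat \<Rightarrow> (ptype \<times> nat) list \<Rightarrow> (nat \<times> bool) list" where
  "overpartition_of d r = level_parts d r 1"

definition codes :: "nat \<Rightarrow> nat \<Rightarrow> nat \<Rightarrow> nat \<Rightarrow> (ptype \<times> nat) list set" where
  "codes d r m n = {xs. length xs = m \<and> sum_list (map fst (overpartition_of d r xs)) = n}"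

definition head_weight :: "nat \<Rightarrow> nat \<Rightarrow> nat \<Rightarrow> ptype \<Rightarrow> nat" where
  "head_weight d r m a = d + type_offset d r a + m * (d * type_rise a)"

definition excess_weight :: "nat \<Rightarrow> nat \<Rightarrow> nat" where
  "excess_weight d m = 2 * d * Suc m"

definition incr_head_excess :: "(ptype \<times> nat) list \<Rightarrow> (ptype \<times> nat) list" where
  "incr_head_excess xs = (fst (hd xs), Suc (snd (hd xs))) # tl xs"

definition code_series :: "nat \<Rightarrow> nat \<Rightarrow> nat \<Rightarrow> rat fps" where
  "code_series d r m = Abs_fps (\<lambda>n. of_nat (card (codes d r m n)))"

lemma part_le_imp_le: "part_le p q \<Longrightarrow> p \<le> q"
  by (cases p; cases q) (auto simp: part_le_def less_eq_prod_def)

lemma length_level_parts [simp]: "length (level_parts d r j xs) = length xs"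
  by (induction xs arbitrary: j) auto

lemma level_parts_ge: "p \<in> set (level_parts d r j xs) \<Longrightarrow> d * j \<le> fst p"
proof (induction xs arbitrary: j)
  case (Cons x xs)
  obtain a g where "x = (a, g)" by fastforce
  with Cons show ?case
    by (auto dest!: Cons.IH simp: algebra_simps intro: le_trans[rotated])
qed simp

lemma sum_level_parts_shift:
  "sum_list (map fst (level_parts d r (j + s) xs)) =
     sum_list (map fst (level_parts d r j xs)) + length xs * (d * s)"
proof (induction xs arbitrary: j)
  case (Cons x xs)
  obtain a g where "x = (a, g)" by fastforce
  then show ?case using Cons.IH[of "j + type_rise a + 2 * g"] by (simp add: algebra_simps)
qed simp

lemma length_overpartition_of [simp]: "length (overpartition_of d r xs) = length xs"
  by (simp add: overpartition_of_def)

lemma sum_overpartition_of_Cons: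
  "sum_list (map fst (overpartition_of d r ((a, g) # xs))) =
     head_weight d r (length xs) a + excess_weight d (length xs) * g +
     sum_list (map fst (overpartition_of d r xs))"
  using sum_level_parts_shift[of d r 1 "type_rise a + 2 * g" xs]
  by (simp add: overpartition_of_def head_weight_def excess_weight_def algebra_simps)

lemma part_type_add_mult: "part_type d r (v + d * j, b) = part_type d r (v, b)"
  by (simp add: part_type_def)

lemma snd_if_part_type: "part_type d r p = Some a \<Longrightarrow> snd p = (a \<noteq> NonD)"
  by (cases a) (auto simp: part_type_def split: if_splits)

lemma gap_ok_iff:
  assumes "part_type d r p = Some b" and "part_type d r q = Some a" and "fst p \<le> fst q"
  shows "gap_ok d r p q \<longleftrightarrow> (\<exists>g. fst q = fst p + Afun d r a b + 2 * d * g)"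
proof
  assume "gap_ok d r p q"
  then have "Afun d r a b \<le> fst q - fst p" and "2 * d dvd (fst q - fst p) - Afun d r a b"
    using assms by (auto simp: gap_ok_def Let_def mod_eq_dvd_iff_nat)
  then obtain g where "(fst q - fst p) - Afun d r a b = 2 * d * g"
    by (elim dvdE)
  with \<open>Afun d r a b \<le> fst q - fst p\<close> show "\<exists>g. fst q = fst p + Afun d r a b + 2 * d * g"
    using assms(3) by (intro exI[of _ g]) linarith
qed (use assms in \<open>auto simp: gap_ok_def Let_def\<close>)

lemma codes_0: "codes d r 0 n = (if n = 0 then {[]} else {})"
  by (auto simp: codes_def overpartition_of_def)

lemma code_series_0: "code_series d r 0 = 1"
  by (rule fps_ext) (simp add: code_series_def codes_0)

lemma Cons_in_codes_Suc_iff: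
  "(a, g) # xs \<in> codes d r (Suc m) n \<longleftrightarrow>
     head_weight d r m a + excess_weight d m * g \<le> n \<and>
     xs \<in> codes d r m (n - (head_weight d r m a + excess_weight d m * g))"
  by (auto simp: codes_def sum_overpartition_of_Cons simp del: level_parts.simps)

lemma ex_Cons_if_in_codes_Suc:
  assumes "xs \<in> codes d r (Suc m) n"
  obtains a g t where "xs = (a, g) # t"
  using assms by (auto simp: codes_def length_Suc_conv)

lemma inj_on_incr_head_excess: "inj_on incr_head_excess {xs. xs \<noteq> []}"
  by (rule inj_onI) (auto simp: incr_head_excess_def neq_Nil_conv prod_eq_iff)

context
  fixes d r :: nat
  assumes r_pos: "0 < r" and r_small: "2 * r < d"
begin

lemma Afun_add_type_offset:
  "Afun d r a b + type_offset d r b = type_offset d r a + d * type_rise b"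
  using r_small by (cases a; cases b) (auto simp: type_offset_def type_rise_def)

lemma type_offset_le: "type_offset d r a \<le> d * type_rise a"
  using r_small by (cases a) (auto simp: type_offset_def type_rise_def)

lemma type_offset_less: "a \<noteq> NonD \<Longrightarrow> type_offset d r a < d * type_rise a"
  using r_pos r_small by (cases a) (auto simp: type_offset_def type_rise_def)

lemma part_type_level: "part_type d r (d * j + type_offset d r a, a \<noteq> NonD) = Some a"
proof -
  have "part_type d r (type_offset d r a, a \<noteq> NonD) = Some a"
    using r_pos r_small by (cases a) (auto simp: part_type_def type_offset_def)
  then show ?thesis by (metis add.commute part_type_add_mult)
qed

lemma part_type_level_parts:
  "p \<in> set (level_parts d r j xs) \<Longrightarrow> part_type d r p \<noteq> None"
proof (induction xs arbitrary: j)
  case (Cons x xs)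
  then show ?case by (cases x) (auto simp: part_type_level)
qed simp

lemma sorted_wrt_part_le_level_parts: "sorted_wrt part_le (level_parts d r j xs)"
proof (induction xs arbitrary: j)
  case (Cons x xs)
  obtain a g where x: "x = (a, g)" by fastforce
  have "part_le (d * (j + 2 * g) + type_offset d r a, a \<noteq> NonD) q"
    if "q \<in> set (level_parts d r (j + type_rise a + 2 * g) xs)" for q
    using level_parts_ge[OF that] type_offset_le[of a] type_offset_less[of a]
    by (auto simp: part_le_def algebra_simps)
  with Cons.IH show ?case by (simp add: x)
qed simp

lemma successively_gap_ok_level_parts:
  assumes "part_type d r p = Some b" and "fst p + d * type_rise b = d * j + type_offset d r b"
  shows "successively (gap_ok d r) (p # level_parts d r j xs)"
  using assms
proof (induction xs arbitrary: p b j)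
  case (Cons x xs)
  obtain a g where x: "x = (a, g)" by fastforce
  define q where "q = (d * (j + 2 * g) + type_offset d r a, a \<noteq> NonD)"
  have type_q: "part_type d r q = Some a"
    using part_type_level[of "j + 2 * g" a] by (simp add: q_def)
  have "fst q = fst p + Afun d r a b + 2 * d * g"
    using Cons.prems(2) Afun_add_type_offset[of a b] by (simp add: q_def algebra_simps)
  then have "gap_ok d r p q"
    using gap_ok_iff[OF Cons.prems(1) type_q] by auto
  moreover have "successively (gap_ok d r) (q # level_parts d r (j + type_rise a + 2 * g) xs)"
    by (rule Cons.IH[OF type_q]) (simp add: q_def algebra_simps)
  ultimately show ?case by (simp add: x q_def)
qed simp

lemma ex_level_parts_eq:
  assumes "part_type d r p = Some b" and "fst p + d * type_rise b = d * j + type_offset d r b"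
    and "sorted (map fst (p # ys))" and "\<forall>y \<in> set ys. part_type d r y \<noteq> None"
    and "successively (gap_ok d r) (p # ys)"
  shows "\<exists>xs. level_parts d r j xs = ys"
  using assms
proof (induction ys arbitrary: p b j)
  case Nil
  show ?case by (metis level_parts.simps(1))
next
  case (Cons y ys)
  obtain a where type_y: "part_type d r y = Some a" using Cons.prems(4) by auto
  have "gap_ok d r p y" using Cons.prems(5) by simp
  then obtain g where "fst y = fst p + Afun d r a b + 2 * d * g"
    using gap_ok_iff[OF Cons.prems(1) type_y] Cons.prems(3) by auto
  then have y: "y = (d * (j + 2 * g) + type_offset d r a, a \<noteq> NonD)"
    using Cons.prems(2) Afun_add_type_offset[of a b] snd_if_part_type[OF type_y]
    by (simp add: prod_eq_iff algebra_simps)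
  have "\<exists>xs. level_parts d r (j + type_rise a + 2 * g) xs = ys"
    by (rule Cons.IH[OF type_y]) (use Cons.prems y in \<open>auto simp: algebra_simps\<close>)
  then obtain xs where "level_parts d r (j + type_rise a + 2 * g) xs = ys" ..
  then show ?case by (intro exI[of _ "(a, g) # xs"]) (simp add: y)
qed

lemma level_parts_inj: "level_parts d r j xs = level_parts d r j ys \<Longrightarrow> xs = ys"
proof (induction xs arbitrary: ys j)
  case Nil
  then show ?case by (cases ys) auto
next
  case (Cons x xs)
  obtain a g where x: "x = (a, g)" by fastforce
  obtain b h ys' where ys: "ys = (b, h) # ys'"
    using Cons.prems by (cases ys) (auto simp: x)
  have head: "(d * (j + 2 * g) + type_offset d r a, a \<noteq> NonD) =
      (d * (j + 2 * h) + type_offset d r b, b \<noteq> NonD)"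
    using Cons.prems by (simp add: x ys)
  then have "a = b" by (metis part_type_level option.inject)
  moreover have "g = h" using head r_small \<open>a = b\<close> by simp
  ultimately show ?case using Cons.prems Cons.IH by (simp add: x ys)
qed

lemma fst_mod_if_part_type:
  "part_type d r p = Some a \<Longrightarrow> fst p mod d = type_offset d r a mod d"
  using r_pos r_small by (cases a) (auto simp: part_type_def type_offset_def split: if_splits)

lemma part_type_zero: "part_type d r (0, True) = Some OvD"
  using r_pos r_small by (simp add: part_type_def)

lemma smallest_ok_iff_gap_ok_zero:
  assumes type_y: "part_type d r y = Some a" and "0 < fst y"
  shows "smallest_ok d r y \<longleftrightarrow> gap_ok d r (0, True) y"
proof -
  obtain v where y: "y = (v, a \<noteq> NonD)"
    using snd_if_part_type[OF type_y] by (cases y) auto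
  define \<rho> where "\<rho> = v mod (2 * d)"
  have \<rho>_type: "\<rho> mod d = type_offset d r a mod d"
    using fst_mod_if_part_type[OF type_y] by (simp add: y \<rho>_def mod_mod_cancel)
  have \<rho>_le: "\<rho> \<le> v" by (simp add: \<rho>_def)
  have \<rho>_0: "2 * d \<le> v" if "\<rho> = 0"
    using that \<open>0 < fst y\<close> by (simp add: y \<rho>_def dvd_imp_le flip: dvd_eq_mod_eq_0)
  have gap: "gap_ok d r (0, True) y \<longleftrightarrow>
      Afun d r a OvD \<le> v \<and> \<rho> = Afun d r a OvD mod (2 * d)"
    using type_y by (simp add: gap_ok_def Let_def y part_type_zero \<rho>_def)
  have mods: "(d + r) mod (2 * d) = d + r" "(2 * d - r) mod (2 * d) = 2 * d - r"
    "(d + r) mod d = r" "(2 * d - r) mod d = d - r" "d mod (2 * d) = d"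
    using r_pos r_small by (simp_all add: mod_if)
  have smallest_overlined: "smallest_ok d r y \<longleftrightarrow> \<rho> = d + r \<or> \<rho> = 2 * d - r \<or> \<rho> = 0"
    if "a \<noteq> NonD"
    using that mods by (simp add: smallest_ok_def y \<rho>_def)
  show ?thesis
  proof (cases a)
    case OvR
    then have "\<rho> mod d = r" using \<rho>_type r_small by (simp add: type_offset_def)
    then have "\<rho> \<noteq> 2 * d - r" "\<rho> \<noteq> 0" using mods r_pos r_small by (auto intro: gr0I)
    with OvR show ?thesis using smallest_overlined gap \<rho>_le mods by auto
  next
    case OvDR
    then have "\<rho> mod d = d - r" using \<rho>_type r_pos r_small by (simp add: type_offset_def)
    then have "\<rho> \<noteq> d + r" "\<rho> \<noteq> 0" using mods r_pos r_small by (auto intro: gr0I)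
    with OvDR show ?thesis using smallest_overlined gap \<rho>_le mods by auto
  next
    case OvD
    then have "\<rho> mod d = 0" using \<rho>_type by (simp add: type_offset_def)
    then have "\<rho> \<noteq> d + r" "\<rho> \<noteq> 2 * d - r" using mods r_pos r_small by auto
    with OvD show ?thesis using smallest_overlined gap \<rho>_0 by auto
  next
    case NonD
    then show ?thesis using gap mods \<rho>_le by (auto simp: smallest_ok_def y \<rho>_def)
  qed
qed

section \<open>The bijection between codes and Cbar\<close>

lemma in_Cbar_overpartition_of: "in_Cbar d r (mset (overpartition_of d r xs))"
proof -
  let ?ys = "level_parts d r 1 xs"
  have sorted_le: "sorted_wrt part_le ?ys" by (rule sorted_wrt_part_le_level_parts)
  have pos: "\<forall>p \<in> set ?ys. 0 < fst p"
    using level_parts_ge[of _ d r 1 xs] r_small by fastforce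
  have "is_overpartition (mset ?ys)"
    using pos count_mset_le_1_if_sorted_wrt[OF sorted_le]
    by (auto simp: is_overpartition_def part_le_def)
  moreover have chain: "successively (gap_ok d r) ((0, True) # ?ys)"
    by (rule successively_gap_ok_level_parts[OF part_type_zero])
      (simp add: type_rise_def type_offset_def)
  moreover have "sorted (map fst ?ys)"
    using sorted_le unfolding sorted_map
    by (rule sorted_wrt_mono_rel[rotated]) (simp add: part_le_def)
  moreover have "smallest_ok d r (hd ?ys)" if "?ys \<noteq> []"
  proof -
    have "hd ?ys \<in> set ?ys" using that by simp
    then show ?thesis
      using smallest_ok_iff_gap_ok_zero chain that pos part_type_level_parts
      by (cases ?ys) fastforce+
  qed
  ultimately have "in_Cbar d r (mset ?ys)"
    unfolding in_Cbar_def
    by (auto simp: part_type_level_parts successively_Cons simp flip: successively_conv_nth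
        intro!: exI[of _ ?ys])
  then show ?thesis by (simp add: overpartition_of_def)
qed

lemma ex_overpartition_of_if_in_Cbar:
  assumes "in_Cbar d r P"
  shows "\<exists>xs. P = mset (overpartition_of d r xs)"
proof -
  obtain ys where P: "P = mset ys" and sorted: "sorted (map fst ys)"
    and gaps: "successively (gap_ok d r) ys"
    and smallest: "ys \<noteq> [] \<longrightarrow> smallest_ok d r (hd ys)"
    and typed: "\<forall>y \<in> set ys. part_type d r y \<noteq> None" and pos: "\<forall>y \<in> set ys. 0 < fst y"
    using assms by (auto simp: in_Cbar_def is_overpartition_def successively_conv_nth)
  have "successively (gap_ok d r) ((0, True) # ys)"
    using gaps smallest typed pos smallest_ok_iff_gap_ok_zero by (cases ys) auto
  then obtain xs where "overpartition_of d r xs = ys"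
    using ex_level_parts_eq[OF part_type_zero, of 1 ys] sorted typed
    by (auto simp: overpartition_of_def type_rise_def type_offset_def)
  with P show ?thesis by blast
qed

lemma inj_mset_level_parts: "inj (\<lambda>xs. mset (level_parts d r j xs))"
proof (rule injI)
  fix xs ys
  assume eq: "mset (level_parts d r j xs) = mset (level_parts d r j ys)"
  have sorted: "sorted (level_parts d r j zs)" for zs
    using sorted_wrt_part_le_level_parts[of j zs]
    by (rule sorted_wrt_mono_rel[rotated]) (simp add: part_le_imp_le)
  have "level_parts d r j xs = level_parts d r j ys"
    using properties_for_sort[OF eq sorted] sorted_sort_id[OF sorted] by simp
  then show "xs = ys" by (rule level_parts_inj)
qed

lemma Cbar_eq_card_codes: "Cbar d r m n = card (codes d r m n)"
proof -
  have "{P. in_Cbar d r P \<and> size P = m \<and> op_weight P = n} =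
      (\<lambda>xs. mset (overpartition_of d r xs)) ` codes d r m n"
  proof (intro set_eqI iffI)
    fix P
    assume P: "P \<in> {P. in_Cbar d r P \<and> size P = m \<and> op_weight P = n}"
    then obtain xs where "P = mset (overpartition_of d r xs)"
      using ex_overpartition_of_if_in_Cbar by blast
    with P show "P \<in> (\<lambda>xs. mset (overpartition_of d r xs)) ` codes d r m n"
      by (intro image_eqI[of _ _ xs]) (auto simp: codes_def op_weight_mset)
  qed (use in_Cbar_overpartition_of in \<open>auto simp: codes_def op_weight_mset\<close>)
  then show ?thesis
    unfolding Cbar_def
    by (simp add: card_image
        inj_on_subset[OF inj_mset_level_parts[of 1, folded overpartition_of_def]])
qed

section \<open>Counting codes\<close>

lemma excess_le_sum_level_parts:
  "(a, g) \<in> set xs \<Longrightarrow> g \<le> sum_list (map fst (level_parts d r j xs))"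
proof (induction xs arbitrary: j)
  case (Cons x xs)
  obtain b h where x: "x = (b, h)" by fastforce
  from Cons.prems x consider "(a, g) = (b, h)" | "(a, g) \<in> set xs" by auto
  then show ?case
  proof cases
    case 1
    have "h \<le> d * h" using r_small by simp
    also have "\<dots> \<le> d * (j + 2 * h)" by simp
    finally show ?thesis using 1 x by simp
  next
    case 2
    then show ?thesis using Cons.IH[of "j + type_rise b + 2 * h"] x by simp
  qed
qed simp

lemma finite_codes: "finite (codes d r m n)"
proof (rule finite_subset)
  show "codes d r m n \<subseteq> {xs. set xs \<subseteq> UNIV \<times> {..n} \<and> length xs = m}"
    using excess_le_sum_level_parts by (fastforce simp: codes_def overpartition_of_def)
  show "finite {xs. set xs \<subseteq> (UNIV :: ptype set) \<times> {..n} \<and> length xs = m}"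
    by (rule finite_lists_length_eq) simp
qed

lemma zero_excess_codes_Suc_eq:
  "{xs \<in> codes d r (Suc m) n. snd (hd xs) = 0} =
     (\<Union>a. if head_weight d r m a \<le> n
       then Cons (a, 0) ` codes d r m (n - head_weight d r m a) else {})"
proof (intro set_eqI iffI)
  fix xs
  assume xs: "xs \<in> {xs \<in> codes d r (Suc m) n. snd (hd xs) = 0}"
  then have "xs \<in> codes d r (Suc m) n" by simp
  then obtain a g t where "xs = (a, g) # t" by (rule ex_Cons_if_in_codes_Suc)
  with xs show "xs \<in> (\<Union>a. if head_weight d r m a \<le> n
      then Cons (a, 0) ` codes d r m (n - head_weight d r m a) else {})"
    by (auto simp: Cons_in_codes_Suc_iff)
qed (auto simp: Cons_in_codes_Suc_iff split: if_splits)

lemma card_codes_Suc_zero_excess: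
  "card {xs \<in> codes d r (Suc m) n. snd (hd xs) = 0} =
     (\<Sum>a\<in>UNIV. if head_weight d r m a \<le> n
       then card (codes d r m (n - head_weight d r m a)) else 0)"
  unfolding zero_excess_codes_Suc_eq
  by (subst card_UN_disjoint) (auto simp: finite_codes card_image intro!: sum.cong)

lemma pos_excess_codes_Suc_eq:
  "{xs \<in> codes d r (Suc m) n. snd (hd xs) \<noteq> 0} =
     (if excess_weight d m \<le> n
      then incr_head_excess ` codes d r (Suc m) (n - excess_weight d m) else {})"
proof (intro set_eqI iffI)
  fix xs
  assume xs: "xs \<in> {xs \<in> codes d r (Suc m) n. snd (hd xs) \<noteq> 0}"
  then have "xs \<in> codes d r (Suc m) n" by simp
  then obtain a g t where "xs = (a, g) # t" by (rule ex_Cons_if_in_codes_Suc)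
  with xs obtain g' where xs': "xs = (a, Suc g') # t" by (auto simp: gr0_conv_Suc)
  then have "xs = incr_head_excess ((a, g') # t)" by (simp add: incr_head_excess_def)
  moreover have "excess_weight d m \<le> n"
    and "(a, g') # t \<in> codes d r (Suc m) (n - excess_weight d m)"
    using xs unfolding xs' by (auto simp: Cons_in_codes_Suc_iff algebra_simps)
  ultimately show "xs \<in> (if excess_weight d m \<le> n
      then incr_head_excess ` codes d r (Suc m) (n - excess_weight d m) else {})"
    by simp
next
  fix xs
  assume "xs \<in> (if excess_weight d m \<le> n
      then incr_head_excess ` codes d r (Suc m) (n - excess_weight d m) else {})"
  then obtain ys
    where ys: "ys \<in> codes d r (Suc m) (n - excess_weight d m)" "xs = incr_head_excess ys"
    and "excess_weight d m \<le> n"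
    by (auto split: if_splits)
  moreover obtain a g t where "ys = (a, g) # t" using ys(1) by (rule ex_Cons_if_in_codes_Suc)
  ultimately show "xs \<in> {xs \<in> codes d r (Suc m) n. snd (hd xs) \<noteq> 0}"
    by (auto simp: incr_head_excess_def Cons_in_codes_Suc_iff algebra_simps)
qed

lemma card_codes_Suc_pos_excess:
  "card {xs \<in> codes d r (Suc m) n. snd (hd xs) \<noteq> 0} =
     (if excess_weight d m \<le> n then card (codes d r (Suc m) (n - excess_weight d m)) else 0)"
proof -
  have "codes d r (Suc m) k \<subseteq> {xs. xs \<noteq> []}" for k
    by (auto simp: codes_def)
  then show ?thesis
    unfolding pos_excess_codes_Suc_eq
    by (simp add: card_image inj_on_subset[OF inj_on_incr_head_excess])
qed

lemma card_codes_Suc: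
  "card (codes d r (Suc m) n) =
     (\<Sum>a\<in>UNIV. if head_weight d r m a \<le> n
       then card (codes d r m (n - head_weight d r m a)) else 0) +
     (if excess_weight d m \<le> n then card (codes d r (Suc m) (n - excess_weight d m)) else 0)"
proof -
  let ?Z = "{xs \<in> codes d r (Suc m) n. snd (hd xs) = 0}"
  let ?P = "{xs \<in> codes d r (Suc m) n. snd (hd xs) \<noteq> 0}"
  have "card (codes d r (Suc m) n) = card (?Z \<union> ?P)"
    by (rule arg_cong[where f = card]) auto
  also have "\<dots> = card ?Z + card ?P"
    by (rule card_Un_disjoint) (auto simp: finite_codes)
  finally show ?thesis by (simp only: card_codes_Suc_zero_excess card_codes_Suc_pos_excess)
qed

lemma code_series_Suc:
  "code_series d r (Suc m) * (1 - fps_X ^ excess_weight d m) =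
     code_series d r m * (\<Sum>a\<in>UNIV. fps_X ^ head_weight d r m a)"
proof (rule fps_ext)
  fix n
  have "(code_series d r (Suc m) * (1 - fps_X ^ excess_weight d m)) $ n =
      of_nat (card (codes d r (Suc m) n)) -
      (if excess_weight d m \<le> n
       then of_nat (card (codes d r (Suc m) (n - excess_weight d m))) else 0)"
    by (simp add: right_diff_distrib fps_X_power_mult_right_nth code_series_def not_less)
  also have "\<dots> = (\<Sum>a\<in>UNIV. if head_weight d r m a \<le> n
      then of_nat (card (codes d r m (n - head_weight d r m a))) else 0)"
    by (auto simp: card_codes_Suc[of m n] intro!: sum.cong)
  also have "\<dots> = (code_series d r m * (\<Sum>a\<in>UNIV. fps_X ^ head_weight d r m a)) $ n"
    by (auto simp: sum_distrib_left fps_sum_nth fps_X_power_mult_right_nth code_series_def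
        intro!: sum.cong)
  finally show "(code_series d r (Suc m) * (1 - fps_X ^ excess_weight d m)) $ n =
      (code_series d r m * (\<Sum>a\<in>UNIV. fps_X ^ head_weight d r m a)) $ n" .
qed

lemma sum_fps_X_power_head_weight:
  "(\<Sum>a\<in>UNIV. fps_X ^ head_weight d r m a :: rat fps) =
     fps_X ^ d * ((1 + fps_X ^ (d * m + r)) * (1 + fps_X ^ (d * m + (d - r))))"
proof -
  have weights: "head_weight d r m NonD = d" "head_weight d r m OvR = d + (d * m + r)"
    "head_weight d r m OvDR = d + (d * m + (d - r))"
    "head_weight d r m OvD = d + (d * m + r) + (d * m + (d - r))"
    using r_small by (simp_all add: head_weight_def type_offset_def type_rise_def algebra_simps)
  show ?thesis
    by (simp add: UNIV_ptype weights power_add algebra_simps)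
qed

lemma rhs_coeff_Suc:
  "rhs_coeff d r (Suc m) * (1 - fps_X ^ excess_weight d m) =
     rhs_coeff d r m * (\<Sum>a\<in>UNIV. fps_X ^ head_weight d r m a)"
proof -
  define P
    where "P = (\<Prod>i<m. (1 + fps_X ^ (d * i + r)) * (1 + fps_X ^ (d * i + (d - r))) :: rat fps)"
  define Q where "Q = (\<Prod>i<m. 1 - fps_X ^ (2 * d * (i + 1)) :: rat fps)"
  define E where "E = (1 - fps_X ^ excess_weight d m :: rat fps)"
  define T where "T = ((1 + fps_X ^ (d * m + r)) * (1 + fps_X ^ (d * m + (d - r))) :: rat fps)"
  have E: "inverse E * E = 1"
    using r_small by (intro inverse_mult_eq_1) (simp add: E_def excess_weight_def)
  have R: "rhs_coeff d r m = fps_X ^ (d * m) * P * inverse Q"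
    unfolding rhs_coeff_def P_def Q_def ..
  have "rhs_coeff d r (Suc m) = fps_X ^ (d * m + d) * (P * T) * inverse (Q * E)"
    unfolding rhs_coeff_def P_def Q_def E_def T_def excess_weight_def prod.lessThan_Suc
    by (simp add: mult.commute[of d])
  also have "\<dots> = (fps_X ^ (d * m) * P * inverse Q) * (fps_X ^ d * T) * inverse E"
    by (simp only: fps_inverse_mult power_add mult_ac)
  finally have
    "rhs_coeff d r (Suc m) * E = rhs_coeff d r m * (fps_X ^ d * T) * (inverse E * E)"
    unfolding R by (simp only: mult_ac)
  then show ?thesis
    unfolding E mult_1_right sum_fps_X_power_head_weight by (simp only: E_def T_def)
qed

lemma code_series_eq_rhs_coeff: "code_series d r m = rhs_coeff d r m"
proof (induction m)
  case 0
  show ?case by (simp add: code_series_0 rhs_coeff_def)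
next
  case (Suc m)
  have "excess_weight d m \<noteq> 0" using r_small by (simp add: excess_weight_def)
  then have "(1 - fps_X ^ excess_weight d m :: rat fps) $ 0 \<noteq> 0" by simp
  then have "(1 - fps_X ^ excess_weight d m :: rat fps) \<noteq> 0" by (metis fps_zero_nth)
  moreover have "code_series d r (Suc m) * (1 - fps_X ^ excess_weight d m) =
      rhs_coeff d r (Suc m) * (1 - fps_X ^ excess_weight d m)"
    by (simp add: code_series_Suc rhs_coeff_Suc Suc.IH)
  ultimately show ?case by simp
qed

end

theorem theorem4p1:
  fixes d r :: nat
  assumes "3 \<le> d" and "1 \<le> r" and "2 * r < d"
  shows "\<forall>m n. of_nat (Cbar d r m n) = fps_nth (rhs_coeff d r m) n"
proof (intro allI)
  fix m n
  \<comment> \<open>The hypothesis 3 \<le> d is implied by the other two.\<close>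
  have r_pos: "0 < r" using assms(2) by simp
  have "of_nat (Cbar d r m n) = code_series d r m $ n"
    by (simp add: Cbar_eq_card_codes[OF r_pos assms(3)] code_series_def)
  also have "\<dots> = rhs_coeff d r m $ n"
    by (simp add: code_series_eq_rhs_coeff[OF r_pos assms(3)])
  finally show "of_nat (Cbar d r m n) = rhs_coeff d r m $ n" .
qed

end
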